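(* Let $m\in\mathbb N$. Suppose $a>0$ is such that for every $u\in H^1(\mathbb B^2)$ with $\int_{\mathbb S^1}e^u\,p\,d\mu_{\mathbb S^1}=0$ for all $p\in\mathring{\mathcal P}_m$, $$a\int_{\mathbb B^2}|\nabla u|^2dx\ge\log\Big(\frac1{2\pi}\int_{\mathbb S^1}e^{u-\bar u}d\mu_{\mathbb S^1}\Big),\qquad\bar u=\frac1{2\pi}\int_{\mathbb S^1}u\,d\mu_{\mathbb S^1}.$$ Then $a\ge\frac{1}{4\pi(m+1)}$.
   Context: $\mathbb B^2$ is the open unit disk, $\mathbb S^1$ its boundary with arclength measure $\mu_{\mathbb S^1}$; $u$ on $\mathbb S^1$ denotes the trace. $\mathcal P_m$ denotes the polynomials on $\mathbb R^2$ of degree at most $m$, and $\mathring{\mathcal P}_m=\{p\in\mathcal P_m:\int_{\mathbb S^1}p\,d\mu_{\mathbb S^1}=0\}$. *)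

theory Defs
  imports "HOL-Analysis.Analysis"
begin

text \<open>The plane R^2 is identified with the complex numbers (x,y) = x + i y.
  The arclength measure on the unit circle S^1 is the image of Lebesgue
  measure on [0, 2 pi] under t maps to cis t.\<close>

definition S1_measure :: "complex measure" where
  "S1_measure = distr (lebesgue_on {0..2*pi}) borel cis"

definition S1_mean :: "(complex \<Rightarrow> real) \<Rightarrow> real" where
  "S1_mean f = (1 / (2*pi)) * (\<integral>z. f z \<partial>S1_measure)"

definition poly2 :: "nat \<Rightarrow> (nat \<Rightarrow> nat \<Rightarrow> real) \<Rightarrow> complex \<Rightarrow> real" where
  "poly2 m c z = (\<Sum>i\<le>m. \<Sum>j\<le>m - i. c i j * Re z ^ i * Im z ^ j)"

text \<open>H1_with_trace u G f: u belongs to H^1 of the unit disk, G is its (weak)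
  gradient and f is its trace on S^1.  H^1 is the completion of functions C^1 up to
  the boundary under the H^1 norm; the trace is the continuous extension of
  restriction to S^1 into L^2(S^1).\<close>

definition H1_with_trace ::
  "(complex \<Rightarrow> real) \<Rightarrow> (complex \<Rightarrow> complex) \<Rightarrow> (complex \<Rightarrow> real) \<Rightarrow> bool" where
  "H1_with_trace u G f \<longleftrightarrow>
     u \<in> borel_measurable lebesgue \<and> G \<in> borel_measurable lebesgue \<and> f \<in> borel_measurable borel \<and>
     (\<exists>\<phi> G\<phi>. (\<forall>n. \<exists>S. open S \<and> cball 0 1 \<subseteq> S \<and> continuous_on S (G\<phi> n) \<and>
                       (\<forall>x\<in>S. (\<phi> n has_derivative (\<lambda>h. G\<phi> n x \<bullet> h)) (at x))) \<and>
        (\<lambda>n. \<integral>\<^sup>+x. ennreal ((\<phi> n x - u x)\<^sup>2) \<partial>(lebesgue_on (ball 0 1))) \<longlonglongrightarrow> 0 \<and>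
        (\<lambda>n. \<integral>\<^sup>+x. ennreal ((norm (G\<phi> n x - G x))\<^sup>2) \<partial>(lebesgue_on (ball 0 1))) \<longlonglongrightarrow> 0 \<and>
        (\<lambda>n. \<integral>\<^sup>+z. ennreal ((\<phi> n z - f z)\<^sup>2) \<partial>S1_measure) \<longlonglongrightarrow> 0)"

end

theory Submission
  imports Defs
begin

text \<open>Let \<open>N = m + 1\<close> and test with \<open>u = t Re (z^N)\<close>, whose Dirichlet energy is \<open>\<pi> N t\<^sup>2\<close>.
  Since \<open>e\<^sup>u\<close> is invariant under rotations by \<open>2\<pi>/N\<close>, while averaging a polynomial of degree
  \<open>\<le> m\<close> over these rotations gives a constant on the circle, \<open>e\<^sup>u\<close> satisfies the moment
  condition. On the circle \<open>u = t cos(N\<theta>)\<close>, so the right-hand side is at least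
  \<open>log (1 + t\<^sup>2/4) \<ge> t\<^sup>2/4 - t\<^sup>4/16\<close>. Dividing by \<open>t\<^sup>2\<close> and letting \<open>t \<rightarrow> 0\<close> gives
  \<open>\<pi> N a \<ge> 1/4\<close>.\<close>

definition zcnj_poly :: "nat \<Rightarrow> (complex \<Rightarrow> complex) \<Rightarrow> bool" where
  "zcnj_poly n g \<longleftrightarrow> (\<exists>d. \<forall>z. g z = (\<Sum>a\<le>n. \<Sum>b\<le>n-a. d a b * z^a * cnj z^b))"

lemma zcnj_poly_const: "zcnj_poly n (\<lambda>_. c)"
proof -
  have "(\<Sum>a\<le>n. \<Sum>b\<le>n-a. (if a = 0 \<and> b = 0 then c else 0) * z^a * cnj z^b) = c" for z
  proof -
    have "(\<Sum>a\<le>n. \<Sum>b\<le>n-a. (if a = 0 \<and> b = 0 then c else 0) * z^a * cnj z^b)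
        = (\<Sum>a\<le>n. if a = 0 then c else 0)"
      by (intro sum.cong refl, rename_tac a, case_tac "a = 0")
        (simp_all add: if_distrib[of "\<lambda>x. x * _"] cong: if_cong)
    then show ?thesis by simp
  qed
  then show ?thesis
    unfolding zcnj_poly_def by (intro exI[of _ "\<lambda>a b. if a = 0 \<and> b = 0 then c else 0"]) auto
qed

lemma zcnj_poly_add: "zcnj_poly n f \<Longrightarrow> zcnj_poly n g \<Longrightarrow> zcnj_poly n (\<lambda>z. f z + g z)"
  unfolding zcnj_poly_def
  by (elim exE, rename_tac d e, rule_tac x = "\<lambda>a b. d a b + e a b" in exI)
    (simp add: sum.distrib distrib_right)

lemma zcnj_poly_cmult: "zcnj_poly n f \<Longrightarrow> zcnj_poly n (\<lambda>z. c * f z)"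
  unfolding zcnj_poly_def
  by (elim exE, rename_tac d, rule_tac x = "\<lambda>a b. c * d a b" in exI)
    (simp add: sum_distrib_left mult.assoc)

lemma zcnj_poly_sum:
  "finite S \<Longrightarrow> (\<And>i. i \<in> S \<Longrightarrow> zcnj_poly n (f i)) \<Longrightarrow> zcnj_poly n (\<lambda>z. \<Sum>i\<in>S. f i z)"
  by (induction S rule: finite_induct) (auto intro: zcnj_poly_add zcnj_poly_const[of n 0, simplified])

lemma zcnj_poly_mult_z:
  assumes "zcnj_poly n g"
  shows "zcnj_poly (Suc n) (\<lambda>z. z * g z)"
proof -
  from assms obtain d where d: "\<And>z. g z = (\<Sum>a\<le>n. \<Sum>b\<le>n-a. d a b * z^a * cnj z^b)"
    unfolding zcnj_poly_def by blast
  define e where "e a b = (case a of 0 \<Rightarrow> 0 | Suc a' \<Rightarrow> d a' b)" for a b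
  have "z * g z = (\<Sum>a\<le>Suc n. \<Sum>b\<le>Suc n-a. e a b * z^a * cnj z^b)" for z
  proof -
    have "(\<Sum>a\<le>Suc n. \<Sum>b\<le>Suc n-a. e a b * z^a * cnj z^b)
        = (\<Sum>a\<le>n. \<Sum>b\<le>Suc n-Suc a. e (Suc a) b * z^Suc a * cnj z^b)"
      by (subst sum.atMost_Suc_shift) (simp add: e_def)
    also have "\<dots> = (\<Sum>a\<le>n. \<Sum>b\<le>n-a. z * (d a b * z^a * cnj z^b))"
      by (simp add: e_def mult_ac)
    also have "\<dots> = z * g z" by (simp add: d sum_distrib_left)
    finally show ?thesis by simp
  qed
  then show ?thesis unfolding zcnj_poly_def by blast
qed

lemma zcnj_poly_mult_cnj:
  assumes "zcnj_poly n g"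
  shows "zcnj_poly (Suc n) (\<lambda>z. cnj z * g z)"
proof -
  from assms obtain d where d: "\<And>z. g z = (\<Sum>a\<le>n. \<Sum>b\<le>n-a. d a b * z^a * cnj z^b)"
    unfolding zcnj_poly_def by blast
  define e where "e a b = (case b of 0 \<Rightarrow> 0 | Suc b' \<Rightarrow> (if a \<le> n then d a b' else 0))" for a b
  have "cnj z * g z = (\<Sum>a\<le>Suc n. \<Sum>b\<le>Suc n-a. e a b * z^a * cnj z^b)" for z
  proof -
    have "(\<Sum>a\<le>Suc n. \<Sum>b\<le>Suc n-a. e a b * z^a * cnj z^b)
        = (\<Sum>a\<le>n. \<Sum>b\<le>Suc (n-a). e a b * z^a * cnj z^b)"
      by (simp add: e_def Suc_diff_le)
    also have "\<dots> = (\<Sum>a\<le>n. \<Sum>b\<le>n-a. cnj z * (d a b * z^a * cnj z^b))"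
      by (rule sum.cong[OF refl], subst sum.atMost_Suc_shift) (simp add: e_def mult_ac)
    also have "\<dots> = cnj z * g z" by (simp add: d sum_distrib_left)
    finally show ?thesis by simp
  qed
  then show ?thesis unfolding zcnj_poly_def by blast
qed

lemma zcnj_poly_mult_Re:
  assumes "zcnj_poly n g"
  shows "zcnj_poly (Suc n) (\<lambda>z. of_real (Re z) * g z)"
proof -
  have "zcnj_poly (Suc n) (\<lambda>z. (1/2) * (z * g z + cnj z * g z))"
    by (intro zcnj_poly_cmult zcnj_poly_add zcnj_poly_mult_z zcnj_poly_mult_cnj assms)
  moreover have "(1/2) * (z * g z + cnj z * g z) = of_real (Re z) * g z" for z
    by (simp add: distrib_right[symmetric] complex_add_cnj)
  ultimately show ?thesis by simp
qed

lemma zcnj_poly_mult_Im: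
  assumes "zcnj_poly n g"
  shows "zcnj_poly (Suc n) (\<lambda>z. of_real (Im z) * g z)"
proof -
  have "zcnj_poly (Suc n) (\<lambda>z. (1/(2*\<i>)) * (z * g z + (-1) * (cnj z * g z)))"
    by (intro zcnj_poly_cmult zcnj_poly_add zcnj_poly_mult_z zcnj_poly_mult_cnj assms)
  moreover have "(1/(2*\<i>)) * (z * g z + (-1) * (cnj z * g z)) = of_real (Im z) * g z" for z
  proof -
    have "z * g z + (-1) * (cnj z * g z) = (z - cnj z) * g z" by (simp add: algebra_simps)
    then show ?thesis
      by (simp add: complex_diff_cnj) (metis complex_i_mult_minus mult.left_commute minus_minus)
  qed
  ultimately show ?thesis by simp
qed

lemma zcnj_poly_mult_Re_Im_power:
  "zcnj_poly k g \<Longrightarrow> zcnj_poly (k + i + j) (\<lambda>z. of_real (Re z ^ i * Im z ^ j) * g z)"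
proof (induction i)
  case 0
  then show ?case
  proof (induction j)
    case (Suc j)
    have "zcnj_poly (Suc (k + 0 + j)) (\<lambda>z. of_real (Im z) * (of_real (Re z ^ 0 * Im z ^ j) * g z))"
      by (intro zcnj_poly_mult_Im Suc)
    then show ?case by (simp add: mult_ac)
  qed simp
next
  case (Suc i)
  have "zcnj_poly (Suc (k + i + j)) (\<lambda>z. of_real (Re z) * (of_real (Re z ^ i * Im z ^ j) * g z))"
    by (intro zcnj_poly_mult_Re Suc)
  then show ?case by (simp add: mult_ac)
qed

lemma zcnj_poly_poly2: "zcnj_poly m (\<lambda>z. of_real (poly2 m c z))"
proof -
  have "zcnj_poly m (\<lambda>z. \<Sum>i\<le>m. \<Sum>j\<le>m - i. of_real (Re z ^ i * Im z ^ j) * of_real (c i j))"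
  proof (intro zcnj_poly_sum finite_atMost)
    fix i j assume "i \<in> {..m}" "j \<in> {..m-i}"
    then have "m - i - j + i + j = m" by auto
    then show "zcnj_poly m (\<lambda>z. of_real (Re z ^ i * Im z ^ j) * of_real (c i j))"
      using zcnj_poly_mult_Re_Im_power[OF zcnj_poly_const[of "m - i - j" "of_real (c i j)"], of i j]
      by simp
  qed
  then show ?thesis unfolding poly2_def by (simp add: mult_ac)
qed


lemma sum_roots_of_unity_power:
  fixes N :: nat and k :: int
  assumes N: "N > 0" and k: "\<bar>k\<bar> < int N"
  shows "(\<Sum>l<N. cis (2*pi*real l*real_of_int k/real N)) = (if k = 0 then of_nat N else 0)"
proof -
  define q where "q = cis (2*pi*real_of_int k/real N)"
  have q_power: "cis (2*pi*real l*real_of_int k/real N) = q ^ l" for l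
    unfolding q_def Complex.DeMoivre by (simp add: mult_ac)
  have "q ^ N = cis (2*pi*real_of_int k)" unfolding q_def Complex.DeMoivre using N by simp
  then have qN: "q ^ N = 1" by (metis Ints_of_int cis_multiple_2pi)
  show ?thesis
  proof (cases "k = 0")
    case False
    have "q \<noteq> 1"
    proof
      assume "q = 1"
      then have "cos (2*pi*real_of_int k/real N) = 1" unfolding q_def
        by (metis cis.sel(1) one_complex.sel(1))
      then obtain n :: int where "2*pi*real_of_int k/real N = real_of_int n * 2 * pi"
        using cos_one_2pi_int by meson
      then have "real_of_int k = real_of_int n * real N" using N by (simp add: field_simps)
      then have "k = n * int N" by (metis of_int_eq_iff of_int_mult of_int_of_nat_eq)
      with k False show False
        by (cases "n = 0") (auto simp: abs_mult dest: mult_le_cancel_right1[THEN iffD1])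
    qed
    then show ?thesis using False by (simp add: q_power sum_gp_strict qN)
  qed simp
qed

text \<open>Rotating by the \<open>N\<close>-th roots of unity multiplies \<open>z\<^sup>a (cnj z)\<^sup>b\<close> by \<open>\<omega>\<^sup>a\<^sup>-\<^sup>b\<close>, and \<open>\<bar>a - b\<bar> < N\<close>,
  so only the diagonal monomials \<open>\<bar>z\<bar>\<^sup>2\<^sup>a = 1\<close> survive the average.\<close>

lemma zcnj_poly_rotation_sum_const:
  assumes "zcnj_poly n g" "n < N"
  obtains K where "\<And>z. norm z = 1 \<Longrightarrow> (\<Sum>l<N. g (cis (2*pi*real l/real N) * z)) = of_nat N * K"
proof -
  from assms(1) obtain d where d: "\<And>z. g z = (\<Sum>a\<le>n. \<Sum>b\<le>n-a. d a b * z^a * cnj z^b)"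
    unfolding zcnj_poly_def by blast
  have N: "N > 0" using assms(2) by simp
  define K where "K = (\<Sum>a\<le>n. if a \<le> n - a then d a a else 0)"
  have "(\<Sum>l<N. g (cis (2*pi*real l/real N) * z)) = of_nat N * K" if z: "norm z = 1" for z
  proof -
    have rotate: "(cis x * z)^a * cnj (cis x * z)^b = (z^a * cnj z^b) * cis (x * real_of_int (int a - int b))"
      for x a b
    proof -
      have "(cis x * z)^a * cnj (cis x * z)^b = (z^a * cnj z^b) * (cis x ^ a * cis (-x) ^ b)"
        by (simp add: power_mult_distrib cis_cnj mult_ac)
      also have "cis x ^ a * cis (-x) ^ b = cis (x * real_of_int (int a - int b))"
        by (simp add: Complex.DeMoivre cis_mult algebra_simps)
      finally show ?thesis .
    qed
    have "(\<Sum>l<N. g (cis (2*pi*real l/real N) * z))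
       = (\<Sum>l<N. \<Sum>a\<le>n. \<Sum>b\<le>n-a. d a b * (z^a * cnj z^b) * cis (2*pi*real l*real_of_int (int a - int b)/real N))"
      unfolding d
    proof (intro sum.cong refl)
      fix l a b
      have "2*pi*real l/real N * real_of_int (int a - int b)
          = 2*pi*real l*real_of_int (int a - int b)/real N"
        by simp
      then show "d a b * (cis (2*pi*real l/real N) * z)^a * cnj (cis (2*pi*real l/real N) * z)^b =
            d a b * (z^a * cnj z^b) * cis (2*pi*real l*real_of_int (int a - int b)/real N)"
        using rotate[of "2*pi*real l/real N" a b] by (simp only: mult.assoc)
    qed
    also have "\<dots> = (\<Sum>a\<le>n. \<Sum>b\<le>n-a. d a b * (z^a * cnj z^b) *
                      (\<Sum>l<N. cis (2*pi*real l*real_of_int (int a - int b)/real N)))"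
      by (simp add: sum_distrib_left sum.swap[of _ "{..<N}"])
    also have "\<dots> = (\<Sum>a\<le>n. \<Sum>b\<le>n-a. d a b * (z^a * cnj z^b) * (if a = b then of_nat N else 0))"
    proof (intro sum.cong refl)
      fix a b assume "a \<in> {..n}" "b \<in> {..n-a}"
      then have "\<bar>int a - int b\<bar> < int N" using assms(2) by auto
      then show "d a b * (z^a * cnj z^b) * (\<Sum>l<N. cis (2*pi*real l*real_of_int (int a - int b)/real N)) =
         d a b * (z^a * cnj z^b) * (if a = b then of_nat N else 0)"
        by (subst sum_roots_of_unity_power[OF N]) auto
    qed
    also have "\<dots> = (\<Sum>a\<le>n. of_nat N * (if a \<le> n - a then d a a else 0))"
    proof (rule sum.cong[OF refl])
      fix a
      have "z^a * cnj z^a = 1"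
        using complex_norm_square[of z] z by (simp add: power_mult_distrib[symmetric])
      then show "(\<Sum>b\<le>n-a. d a b * (z^a * cnj z^b) * (if a = b then of_nat N else 0))
          = of_nat N * (if a \<le> n - a then d a a else 0)"
        by (simp add: if_distrib[of "\<lambda>x. _ * x"] cong: if_cong)
    qed
    also have "\<dots> = of_nat N * K" by (simp add: K_def sum_distrib_left)
    finally show ?thesis .
  qed
  then show ?thesis using that by blast
qed

lemma S1_integral_continuous:
  fixes g :: "complex \<Rightarrow> real"
  assumes g: "continuous_on UNIV g"
  shows "(\<integral>z. g z \<partial>S1_measure) = integral {0..2*pi} (\<lambda>t. g (cis t))"
proof -
  have cis_measurable: "cis \<in> measurable (lebesgue_on {0..2*pi}) borel"
    by (intro continuous_imp_measurable_on_sets_lebesgue continuous_intros) auto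
  have "continuous_on {0..2*pi} (\<lambda>t. g (cis t))"
    by (rule continuous_on_compose2[OF g]) (auto intro: continuous_intros)
  then have "integrable (lebesgue_on {0..2*pi}) (\<lambda>t. g (cis t))"
    by (rule continuous_imp_integrable_real)
  moreover have "(\<integral>z. g z \<partial>S1_measure) = (\<integral>t. g (cis t) \<partial>lebesgue_on {0..2*pi})"
    unfolding S1_measure_def
    by (rule integral_distr[OF cis_measurable borel_measurable_continuous_onI[OF g]])
  ultimately show ?thesis by (simp add: lebesgue_integral_eq_integral)
qed

lemma integral_periodic_shift:
  fixes F :: "real \<Rightarrow> real"
  assumes F: "continuous_on UNIV F" and periodic: "\<And>x. F (x + 2*pi) = F x"
    and b: "0 \<le> b" "b \<le> 2*pi"
  shows "integral {0..2*pi} (\<lambda>x. F (x + b)) = integral {0..2*pi} F"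
proof -
  have F_integrable: "F integrable_on {u..v}" for u v
    using F by (intro integrable_continuous_real) (auto intro: continuous_on_subset)
  have "integral {0..2*pi} (\<lambda>x. F (x + b)) = integral {b..2*pi+b} F"
    using integral_shift_real_ivl[where f=F and a=b and b="2*pi+b" and c=b] by simp
  also have "\<dots> = integral {b..2*pi} F + integral {2*pi..2*pi+b} F"
    using b Henstock_Kurzweil_Integration.integral_combine[where f=F and a=b and c="2*pi" and b="2*pi+b", OF _ _ F_integrable]
    by simp
  also have "integral {2*pi..2*pi+b} F = integral {0..b} (\<lambda>x. F (x + 2*pi))"
    using integral_shift_real_ivl[where f=F and a="2*pi" and b="2*pi+b" and c="2*pi"] by simp
  also have "\<dots> = integral {0..b} F" by (simp add: periodic)
  also have "integral {b..2*pi} F + integral {0..b} F = integral {0..2*pi} F"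
    using b Henstock_Kurzweil_Integration.integral_combine[where f=F and a=0 and c=b and b="2*pi", OF _ _ F_integrable] by simp
  finally show ?thesis .
qed

lemma integral_cis_rotate:
  fixes g :: "complex \<Rightarrow> real"
  assumes g: "continuous_on UNIV g" and b: "0 \<le> b" "b \<le> 2*pi"
  shows "integral {0..2*pi} (\<lambda>t. g (cis b * cis t)) = integral {0..2*pi} (\<lambda>t. g (cis t))"
proof -
  have "integral {0..2*pi} (\<lambda>t. g (cis (t + b))) = integral {0..2*pi} (\<lambda>t. g (cis t))"
  proof (rule integral_periodic_shift[OF _ _ b])
    show "continuous_on UNIV (\<lambda>t. g (cis t))"
      by (rule continuous_on_compose2[OF g]) (auto intro: continuous_intros)
  qed (simp add: cis.code)
  then show ?thesis by (simp add: cis_mult add.commute)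
qed

lemma integral_cis_rotation_average:
  fixes E g :: "complex \<Rightarrow> real"
  assumes E: "continuous_on UNIV E" and g: "continuous_on UNIV g" and N: "N > 0"
    and invariant: "\<And>l z. E (cis (2*pi*real l/real N) * z) = E z"
  shows "real N * integral {0..2*pi} (\<lambda>t. E (cis t) * g (cis t))
       = integral {0..2*pi} (\<lambda>t. E (cis t) * (\<Sum>l<N. g (cis (2*pi*real l/real N) * cis t)))"
proof -
  let ?\<omega> = "\<lambda>l. cis (2*pi*real l/real N)"
  have Eg: "continuous_on UNIV (\<lambda>z. E z * g z)"
    using E g by (rule continuous_on_mult)
  have integrable: "(\<lambda>t. E (cis t) * g (?\<omega> l * cis t)) integrable_on {0..2*pi}" for l
    by (intro integrable_continuous_real continuous_on_mult continuous_on_compose2[OF E]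
        continuous_on_compose2[OF g] continuous_intros) auto
  have "integral {0..2*pi} (\<lambda>t. E (?\<omega> l * cis t) * g (?\<omega> l * cis t))
      = integral {0..2*pi} (\<lambda>t. E (cis t) * g (cis t))" if "l < N" for l
    using that N by (intro integral_cis_rotate[OF Eg]) (auto simp: field_simps)
  then have "real N * integral {0..2*pi} (\<lambda>t. E (cis t) * g (cis t))
      = (\<Sum>l<N. integral {0..2*pi} (\<lambda>t. E (cis t) * g (?\<omega> l * cis t)))"
    by (simp add: invariant)
  also have "\<dots> = integral {0..2*pi} (\<lambda>t. \<Sum>l<N. E (cis t) * g (?\<omega> l * cis t))"
    by (rule integral_sum[symmetric]) (use integrable in auto)
  finally show ?thesis by (simp add: sum_distrib_left)
qed

lemma S1_integral_invariant_weight_poly2: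
  fixes E :: "complex \<Rightarrow> real"
  assumes E: "continuous_on UNIV E" and "m < N"
    and invariant: "\<And>l z. E (cis (2*pi*real l/real N) * z) = E z"
    and mean_zero: "(\<integral>z. poly2 m c z \<partial>S1_measure) = 0"
  shows "(\<integral>z. E z * poly2 m c z \<partial>S1_measure) = 0"
proof -
  have N: "N > 0" using \<open>m < N\<close> by simp
  have p: "continuous_on UNIV (poly2 m c)"
    unfolding poly2_def by (intro continuous_intros)
  obtain K where K: "\<And>z. norm z = 1 \<Longrightarrow>
      (\<Sum>l<N. complex_of_real (poly2 m c (cis (2*pi*real l/real N) * z))) = of_nat N * K"
    using zcnj_poly_rotation_sum_const[OF zcnj_poly_poly2 \<open>m < N\<close>] by blast
  have K_Re: "(\<Sum>l<N. poly2 m c (cis (2*pi*real l/real N) * cis t)) = real N * Re K" for t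
    using arg_cong[OF K[of "cis t"], of Re] by (simp add: Re_sum)
  have average: "integral {0..2*pi} (\<lambda>t. F (cis t) * poly2 m c (cis t))
      = Re K * integral {0..2*pi} (\<lambda>t. F (cis t))"
    if "continuous_on UNIV F" "\<And>l z. F (cis (2*pi*real l/real N) * z) = F z" for F
    using integral_cis_rotation_average[OF that(1) p N that(2)] N by (simp add: K_Re)
  have "Re K * (2 * pi) = 0"
    using average[of "\<lambda>_. 1"] mean_zero S1_integral_continuous[OF p] by simp
  then have "Re K = 0" by simp
  then show ?thesis
    using average[OF E invariant] S1_integral_continuous[OF continuous_on_mult[OF E p]] by simp
qed


lemma exp_ge_cubic_Taylor: "1 + x + x^2/2 + x^3/6 \<le> exp (x::real)"
proof -
  obtain \<xi> where "exp x = (\<Sum>k<4. x ^ k / fact k) + exp \<xi> / fact 4 * x ^ 4"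
    using Maclaurin_exp_le[of x 4] by blast
  moreover have "(\<Sum>k<4. x ^ k / fact k) = 1 + x + x^2/2 + x^3/6"
    by (simp add: eval_nat_numeral fact_numeral)
  moreover have "exp \<xi> / fact 4 * x ^ 4 \<ge> 0" by simp
  ultimately show ?thesis by linarith
qed

lemma has_integral_const_0_2pi: "((\<lambda>x. c) has_integral 2*pi*c) {0..2*pi}"
  using has_integral_const_real[of c 0 "2*pi"] by simp

lemma has_integral_cos_multiple:
  assumes "k > 0"
  shows "((\<lambda>x. cos (real k * x)) has_integral 0) {0..2*pi}"
proof -
  have "((\<lambda>x. cos (real k * x)) has_integral (sin (real k * (2*pi))/real k - sin (real k * 0)/real k))
      {0..2*pi}"
  proof (rule fundamental_theorem_of_calculus)
    show "((\<lambda>x. sin (real k * x) / real k) has_vector_derivative cos (real k * x)) (at x within {0..2*pi})"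
      for x
      using assms unfolding has_vector_derivative_def by (intro derivative_eq_intros | force)+
  qed auto
  moreover have "sin (real k * (2*pi)) = 0"
    using sin_2npi[of k] by (simp add: mult_ac)
  ultimately show ?thesis by simp
qed

lemma has_integral_cos_multiple_powers:
  assumes "N > 0"
  shows "((\<lambda>x. (cos (real N * x))^2) has_integral pi) {0..2*pi}"
    and "((\<lambda>x. (cos (real N * x))^3) has_integral 0) {0..2*pi}"
proof -
  have cos_square: "(cos y)^2 = 1/2 + (1/2) * cos (2*y)" for y :: real
    by (subst cos_double_cos) (simp add: field_simps)
  have "((\<lambda>x. 1/2 + (1/2) * cos (real (2*N) * x)) has_integral (2*pi*(1/2) + (1/2) * 0))
      {0..2*pi}"
    using assms by (intro has_integral_add has_integral_mult_right has_integral_const_0_2pi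
        has_integral_cos_multiple) auto
  then show "((\<lambda>x. (cos (real N * x))^2) has_integral pi) {0..2*pi}"
    by (simp add: cos_square mult.assoc)
  have cos_cube: "(cos y)^3 = (3/4) * cos y + (1/4) * cos (3*y)" for y :: real
    by (subst cos_treble_cos) (simp add: field_simps)
  have "((\<lambda>x. (3/4) * cos (real N * x) + (1/4) * cos (real (3*N) * x)) has_integral
      ((3/4) * 0 + (1/4) * 0)) {0..2*pi}"
    using assms by (intro has_integral_add has_integral_mult_right has_integral_cos_multiple) auto
  then show "((\<lambda>x. (cos (real N * x))^3) has_integral 0) {0..2*pi}"
    by (simp add: cos_cube mult.assoc)
qed

lemma integral_exp_cos_multiple_ge:
  assumes "N > 0"
  shows "2*pi + t^2 * pi / 2 \<le> integral {0..2*pi} (\<lambda>x. exp (t * cos (real N * x)))"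
proof -
  let ?c = "\<lambda>x. cos (real N * x)"
  have cubic: "((\<lambda>x. 1 + t * ?c x + t^2/2 * (?c x)^2 + t^3/6 * (?c x)^3)
      has_integral (2*pi*1 + t * 0 + t^2/2 * pi + t^3/6 * 0)) {0..2*pi}"
    using assms
    by (intro has_integral_add has_integral_mult_right has_integral_const_0_2pi
        has_integral_cos_multiple has_integral_cos_multiple_powers)
  have "2*pi + t^2 * pi / 2 = integral {0..2*pi} (\<lambda>x. 1 + t * ?c x + t^2/2 * (?c x)^2 + t^3/6 * (?c x)^3)"
    using integral_unique[OF cubic] by simp
  also have "\<dots> \<le> integral {0..2*pi} (\<lambda>x. exp (t * ?c x))"
  proof (rule integral_le)
    show "(\<lambda>x. exp (t * ?c x)) integrable_on {0..2*pi}"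
      by (intro integrable_continuous_real continuous_intros)
    show "1 + t * ?c x + t^2/2 * (?c x)^2 + t^3/6 * (?c x)^3 \<le> exp (t * ?c x)" for x
      using exp_ge_cubic_Taylor[of "t * ?c x"] by (simp add: power_mult_distrib)
  qed (use cubic in blast)
  finally show ?thesis .
qed

lemma S1_mean_Re_power:
  assumes "N > 0"
  shows "S1_mean (\<lambda>z. t * Re (z ^ N)) = 0"
proof -
  have "(\<integral>z. t * Re (z ^ N) \<partial>S1_measure) = integral {0..2*pi} (\<lambda>x. t * cos (real N * x))"
    by (subst S1_integral_continuous) (intro continuous_intros, simp add: Complex.DeMoivre)
  also have "\<dots> = 0"
    using integral_unique[OF has_integral_cos_multiple[OF assms]] by simp
  finally show ?thesis unfolding S1_mean_def by simp
qed

lemma ln_S1_average_exp_Re_power_ge: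
  assumes "N > 0" and t: "\<bar>t\<bar> \<le> 2"
  shows "t^2/4 - t^4/16 \<le> ln ((1 / (2*pi)) * (\<integral>z. exp (t * Re (z ^ N)) \<partial>S1_measure))"
proof -
  have "(\<integral>z. exp (t * Re (z ^ N)) \<partial>S1_measure) = integral {0..2*pi} (\<lambda>x. exp (t * cos (real N * x)))"
    by (subst S1_integral_continuous) (intro continuous_intros, simp add: Complex.DeMoivre)
  with integral_exp_cos_multiple_ge[OF assms(1), of t]
  have average: "1 + t^2/4 \<le> (1 / (2*pi)) * (\<integral>z. exp (t * Re (z ^ N)) \<partial>S1_measure)"
    by (simp add: field_simps)
  have "t^2 \<le> 2^2" using t by (metis abs_le_square_iff abs_numeral)
  then have "t^2/4 - (t^2/4)^2 \<le> ln (1 + t^2/4)"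
    by (intro ln_one_plus_pos_lower_bound) auto
  also have "\<dots> \<le> ln ((1 / (2*pi)) * (\<integral>z. exp (t * Re (z ^ N)) \<partial>S1_measure))"
    using average by (intro ln_mono) (auto simp: add_pos_nonneg)
  finally show ?thesis by (simp add: power_divide power_mult[symmetric])
qed

lemma S1_integral_exp_Re_power_poly2:
  assumes "m < N" and "(\<integral>z. poly2 m c z \<partial>S1_measure) = 0"
  shows "(\<integral>z. exp (t * Re (z ^ N)) * poly2 m c z \<partial>S1_measure) = 0"
proof (rule S1_integral_invariant_weight_poly2[OF _ assms(1) _ assms(2)])
  show "continuous_on UNIV (\<lambda>z. exp (t * Re (z ^ N)))"
    by (intro continuous_intros)
  have "cis (2*pi*real l/real N) ^ N = 1" for l
    using assms(1) by (simp add: Complex.DeMoivre)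
  then show "exp (t * Re ((cis (2*pi*real l/real N) * z) ^ N)) = exp (t * Re (z ^ N))" for l z
    by (simp add: power_mult_distrib)
qed


lemma nn_integral_lborel_complex_scale:
  fixes f :: "complex \<Rightarrow> ennreal"
  assumes [measurable]: "f \<in> borel_measurable borel" and c: "c > 0"
  shows "(\<integral>\<^sup>+x. f x \<partial>lborel) = ennreal (c^2) * (\<integral>\<^sup>+x. f (c *\<^sub>R x) \<partial>lborel)"
proof -
  have "(\<integral>\<^sup>+x. f x \<partial>lborel)
      = (\<integral>\<^sup>+x. f x \<partial>density (distr lborel borel (\<lambda>x. 0 + c *\<^sub>R x)) (\<lambda>_. \<bar>c\<bar>^DIM(complex)))"
    using lborel_affine[of c "0::complex"] c by simp
  also have "\<dots> = ennreal (c^2) * (\<integral>\<^sup>+x. f (c *\<^sub>R x) \<partial>lborel)"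
    using c by (simp add: nn_integral_density nn_integral_distr nn_integral_cmult)
  finally show ?thesis .
qed

lemma sets_borel_ball_complex [measurable]: "ball (c::complex) r \<in> sets borel"
  by simp

lemma borel_measurable_norm_power_complex [measurable]:
  "(\<lambda>x::complex. norm x ^ n) \<in> borel_measurable borel"
  by (intro borel_measurable_continuous_onI continuous_intros)

definition disk_moment :: "nat \<Rightarrow> real \<Rightarrow> ennreal" where
  "disk_moment k r = (\<integral>\<^sup>+x. indicator (ball (0::complex) r) x * ennreal (norm x ^ (2*k)) \<partial>lborel)"

lemma disk_moment_scale:
  assumes r: "r > 0"
  shows "disk_moment k r = ennreal (r ^ (2*k+2)) * disk_moment k 1"
proof -
  have "disk_moment k r = ennreal (r^2) *
      (\<integral>\<^sup>+x. indicator (ball (0::complex) r) (r *\<^sub>R x) * ennreal (norm (r *\<^sub>R x) ^ (2*k)) \<partial>lborel)"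
    unfolding disk_moment_def
    by (rule nn_integral_lborel_complex_scale[OF _ r]) measurable
  also have "(\<lambda>x::complex. indicator (ball (0::complex) r) (r *\<^sub>R x) * ennreal (norm (r *\<^sub>R x) ^ (2*k)))
     = (\<lambda>x. ennreal (r^(2*k)) * (indicator (ball 0 1) x * ennreal (norm x ^ (2*k))))"
  proof
    fix x :: complex
    have "r *\<^sub>R x \<in> ball 0 r \<longleftrightarrow> x \<in> ball 0 1" using r by (simp add: abs_of_pos)
    then show "indicator (ball (0::complex) r) (r *\<^sub>R x) * ennreal (norm (r *\<^sub>R x) ^ (2*k))
        = ennreal (r^(2*k)) * (indicator (ball 0 1) x * ennreal (norm x ^ (2*k)))"
      using r by (auto simp: indicator_def abs_of_pos power_mult_distrib ennreal_mult)
  qed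
  also have "(\<integral>\<^sup>+x. ennreal (r^(2*k)) * (indicator (ball (0::complex) 1) x * ennreal (norm x ^ (2*k))) \<partial>lborel)
     = ennreal (r^(2*k)) * disk_moment k 1"
    unfolding disk_moment_def
    by (rule nn_integral_cmult) measurable
  finally show ?thesis
    using r by (simp add: mult.assoc[symmetric] ennreal_mult[symmetric] power_add[symmetric] add.commute)
qed

lemma disk_moment_unit_le_pi: "disk_moment k 1 \<le> ennreal pi"
proof -
  have "disk_moment k 1 \<le> (\<integral>\<^sup>+x. indicator (ball (0::complex) 1) x \<partial>lborel)"
    unfolding disk_moment_def by (intro nn_integral_mono) (auto simp: indicator_def power_le_one)
  also have "\<dots> = ennreal pi" by (simp add: emeasure_ball unit_ball_vol_2)
  finally show ?thesis .
qed

lemma disk_moment_unit_le_annulus: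
  assumes r: "0 < r" "r < 1"
  shows "disk_moment k 1 \<le> disk_moment k r + ennreal (pi - pi * r^2)"
proof -
  have "disk_moment k 1 \<le> (\<integral>\<^sup>+x. indicator (ball (0::complex) r) x * ennreal (norm x ^ (2*k))
      + indicator (ball 0 1 - ball 0 r) x \<partial>lborel)"
    unfolding disk_moment_def by (intro nn_integral_mono) (auto simp: indicator_def power_le_one)
  also have "\<dots> = disk_moment k r + emeasure lborel (ball (0::complex) 1 - ball 0 r)"
    unfolding disk_moment_def by (subst nn_integral_add) auto
  also have "emeasure lborel (ball (0::complex) 1 - ball 0 r)
      = emeasure lborel (ball (0::complex) 1) - emeasure lborel (ball (0::complex) r)"
    using r by (intro emeasure_Diff) (auto simp: emeasure_ball)
  also have "\<dots> = ennreal (pi - pi * r^2)"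
    using r by (simp add: emeasure_ball unit_ball_vol_2 ennreal_minus mult.commute)
  finally show ?thesis .
qed

text \<open>With \<open>j\<close> the unit moment, scaling and the annulus bound give
  \<open>j (1 - s\<^sup>k\<^sup>+\<^sup>1) \<le> \<pi> (1 - s)\<close> for \<open>0 < s < 1\<close>; divide by \<open>1 - s\<close> and let \<open>s \<rightarrow> 1\<close>.\<close>

lemma disk_moment_unit_le: "enn2real (disk_moment k 1) \<le> pi / real (k+1)"
proof -
  define j where "j = enn2real (disk_moment k 1)"
  have "disk_moment k 1 < \<infinity>"
    using disk_moment_unit_le_pi[of k] by (simp add: le_less_trans)
  then have j: "disk_moment k 1 = ennreal j" "j \<ge> 0"
    unfolding j_def by simp_all
  have bound: "j * (\<Sum>i\<le>k. s^i) \<le> pi" if s: "s \<in> {0<..<1}" for s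
  proof -
    define r where "r = sqrt s"
    have r: "0 < r" "r < 1" "r^2 = s" using s by (auto simp: r_def)
    then have "pi - pi * r^2 \<ge> 0" using s by simp
    have "ennreal j \<le> ennreal (r^(2*k+2)) * ennreal j + ennreal (pi - pi * r^2)"
      using disk_moment_unit_le_annulus[OF r(1,2), of k] disk_moment_scale[OF r(1), of k] j
      by simp
    also have "\<dots> = ennreal (r^(2*k+2) * j + (pi - pi * r^2))"
      using r j \<open>pi - pi * r^2 \<ge> 0\<close> by (simp add: ennreal_mult ennreal_plus)
    finally have "j \<le> r^(2*k+2) * j + (pi - pi * r^2)"
      by (rule ennreal_le_iff[THEN iffD1, rotated]) (use r j \<open>pi - pi * r^2 \<ge> 0\<close> in auto)
    moreover have "r^(2*k+2) = s^(k+1)"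
      unfolding r(3)[symmetric] power_mult[symmetric] by (simp add: algebra_simps)
    ultimately have "j * (1 - s^(k+1)) \<le> pi * (1 - s)"
      using r(3) by (simp add: algebra_simps)
    moreover have "1 - s^(k+1) = (1 - s) * (\<Sum>i\<le>k. s^i)"
      using one_diff_power_eq[of s "Suc k"] unfolding lessThan_Suc_atMost by simp
    ultimately have "(1 - s) * (j * (\<Sum>i\<le>k. s^i)) \<le> (1 - s) * pi"
      by (simp add: mult_ac)
    then show ?thesis using s by simp
  qed
  have "((\<lambda>s. j * (\<Sum>i\<le>k. s^i)) \<longlongrightarrow> j * (\<Sum>i\<le>k. 1^i)) (at_left (1::real))"
    by (intro tendsto_intros)
  moreover have "eventually (\<lambda>s. j * (\<Sum>i\<le>k. s^i) \<le> pi) (at_left (1::real))"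
    using eventually_at_left_real[OF zero_less_one] by (rule eventually_mono) (rule bound)
  ultimately have "j * real (k+1) \<le> pi"
    by (intro tendsto_le[of _ "\<lambda>_. pi"]) auto
  then show ?thesis unfolding j_def[symmetric] by (simp add: field_simps)
qed

lemma integral_unit_disk_norm_power_le:
  "(\<integral>x. norm x ^ (2*k) \<partial>lebesgue_on (ball (0::complex) 1)) \<le> pi / real (k+1)"
proof -
  have "(\<lambda>x::complex. norm x ^ (2*k)) \<in> borel_measurable (lebesgue_on (ball 0 1))"
    by (intro continuous_imp_measurable_on_sets_lebesgue continuous_intros) auto
  then have "(\<integral>x. norm x ^ (2*k) \<partial>lebesgue_on (ball (0::complex) 1))
      = enn2real (\<integral>\<^sup>+x. ennreal (norm x ^ (2*k)) \<partial>lebesgue_on (ball (0::complex) 1))"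
    by (rule integral_eq_nn_integral) auto
  also have "(\<integral>\<^sup>+x. ennreal (norm x ^ (2*k)) \<partial>lebesgue_on (ball (0::complex) 1))
      = (\<integral>\<^sup>+x. ennreal (norm x ^ (2*k)) * indicator (ball (0::complex) 1) x \<partial>lebesgue)"
    by (rule nn_integral_restrict_space) auto
  also have "\<dots> = disk_moment k 1"
    unfolding disk_moment_def nn_integral_completion by (simp add: mult.commute)
  finally show ?thesis using disk_moment_unit_le by simp
qed

lemma H1_with_trace_Re_power:
  "H1_with_trace (\<lambda>z. t * Re (z ^ Suc m)) (\<lambda>z. cnj (complex_of_real (t * real (Suc m)) * z ^ m))
     (\<lambda>z. t * Re (z ^ Suc m))"
proof -
  define u where "u = (\<lambda>z::complex. t * Re (z ^ Suc m))"
  define G where "G = (\<lambda>z::complex. cnj (complex_of_real (t * real (Suc m)) * z ^ m))"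
  have u_cont: "continuous_on UNIV u" unfolding u_def by (intro continuous_intros)
  have G_cont: "continuous_on UNIV G" unfolding G_def by (intro continuous_intros)
  have gradient: "(u has_derivative (\<lambda>h. G x \<bullet> h)) (at x)" for x
  proof -
    have "((\<lambda>z. z ^ Suc m) has_derivative (*) (of_nat (Suc m) * x ^ m)) (at x)"
      using DERIV_power[OF DERIV_ident, of "Suc m" x] by (simp add: has_field_derivative_def)
    then have "(u has_derivative (\<lambda>h. t * Re ((of_nat (Suc m) * x ^ m) * h))) (at x)"
      unfolding u_def by (intro has_derivative_mult_right has_derivative_Re)
    moreover have "Re (cnj x ^ m) = Re (x ^ m)" "Im (cnj x ^ m) = - Im (x ^ m)"
      by (metis complex_cnj_power cnj.sel)+
    then have "(\<lambda>h. t * Re ((of_nat (Suc m) * x ^ m) * h)) = (\<lambda>h. G x \<bullet> h)"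
      by (auto simp: G_def inner_complex_def algebra_simps)
    ultimately show ?thesis by simp
  qed
  have "H1_with_trace u G u"
    unfolding H1_with_trace_def
  proof (intro conjI exI[of _ "\<lambda>n. u"] exI[of _ "\<lambda>n. G"])
    show "u \<in> borel_measurable lebesgue"
      using continuous_imp_measurable_on_sets_lebesgue[OF u_cont] by (simp add: lebesgue_on_UNIV_eq)
    show "G \<in> borel_measurable lebesgue"
      using continuous_imp_measurable_on_sets_lebesgue[OF G_cont] by (simp add: lebesgue_on_UNIV_eq)
    show "u \<in> borel_measurable borel" by (rule borel_measurable_continuous_onI[OF u_cont])
    show "\<forall>n. \<exists>S. open S \<and> cball 0 1 \<subseteq> S \<and> continuous_on S G \<and>
        (\<forall>x\<in>S. (u has_derivative (\<lambda>h. G x \<bullet> h)) (at x))"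
      using G_cont gradient by (intro allI exI[of _ UNIV]) auto
  qed simp_all
  then show ?thesis unfolding u_def G_def .
qed

lemma Dirichlet_energy_Re_power_le:
  "(\<integral>x. (norm (cnj (complex_of_real (t * real (Suc m)) * x ^ m)))\<^sup>2 \<partial>lebesgue_on (ball 0 1))
     \<le> t^2 * real (Suc m) * pi"
proof -
  have "(norm (cnj (complex_of_real (t * real (Suc m)) * x ^ m)))\<^sup>2 = (t * real (Suc m))^2 * norm x ^ (2*m)"
    for x :: complex
    by (simp only: norm_mult norm_power complex_mod_cnj norm_of_real power_mult_distrib
        power_mult[symmetric] abs_mult abs_of_nat power2_abs mult.commute)
  then have "(\<integral>x. (norm (cnj (complex_of_real (t * real (Suc m)) * x ^ m)))\<^sup>2 \<partial>lebesgue_on (ball 0 1))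
      = (t * real (Suc m))^2 * (\<integral>x. norm x ^ (2*m) \<partial>lebesgue_on (ball (0::complex) 1))"
    by simp
  also have "\<dots> \<le> (t * real (Suc m))^2 * (pi / real (Suc m))"
    using integral_unit_disk_norm_power_le[of m] by (intro mult_left_mono) auto
  also have "\<dots> = t^2 * real (Suc m) * pi"
    by (simp add: power2_eq_square)
  finally show ?thesis .
qed

theorem mainTheorem16:
  fixes m :: nat and a :: real
  assumes "a > 0"
    and "\<forall>u G f. H1_with_trace u G f \<and>
           (\<forall>c. (\<integral>z. poly2 m c z \<partial>S1_measure) = 0 \<longrightarrow>
                 (\<integral>z. exp (f z) * poly2 m c z \<partial>S1_measure) = 0) \<longrightarrow>
           a * (\<integral>x. (norm (G x))\<^sup>2 \<partial>(lebesgue_on (ball 0 1)))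
             \<ge> ln ((1 / (2*pi)) * (\<integral>z. exp (f z - S1_mean f) \<partial>S1_measure))"
  shows "a \<ge> 1 / (4 * pi * (real m + 1))"
proof -
  have lower: "1/4 - t^2/16 \<le> a * real (Suc m) * pi" if t: "0 < t" "t < 2" for t
  proof -
    let ?u = "\<lambda>z. t * Re (z ^ Suc m)" and ?G = "\<lambda>z. cnj (complex_of_real (t * real (Suc m)) * z ^ m)"
    have "t^2 * (1/4 - t^2/16) = t^2/4 - t^4/16" by (simp add: right_diff_distrib flip: power_add)
    also have "\<dots> \<le> ln ((1 / (2*pi)) * (\<integral>z. exp (?u z - S1_mean ?u) \<partial>S1_measure))"
      using ln_S1_average_exp_Re_power_ge[of "Suc m" t] S1_mean_Re_power[of "Suc m" t] t by simp
    also have "\<dots> \<le> a * (\<integral>x. (norm (?G x))\<^sup>2 \<partial>lebesgue_on (ball 0 1))"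
      using assms(2) H1_with_trace_Re_power[of t m] S1_integral_exp_Re_power_poly2[of m "Suc m"]
      by blast
    also have "\<dots> \<le> a * (t^2 * real (Suc m) * pi)"
      using Dirichlet_energy_Re_power_le assms(1) by (intro mult_left_mono) auto
    finally show ?thesis using t by (simp add: mult_ac)
  qed
  have "((\<lambda>t. 1/4 - t^2/16) \<longlongrightarrow> 1/4 - 0^2/16) (at_right (0::real))"
    by (intro tendsto_intros) simp
  moreover have "eventually (\<lambda>t. 1/4 - t^2/16 \<le> a * real (Suc m) * pi) (at_right (0::real))"
    using eventually_at_right_real[of 0 "2::real", simplified]
    by (rule eventually_mono) (intro lower; simp)
  ultimately have "1/4 \<le> a * real (Suc m) * pi"
    by (intro tendsto_le[of _ "\<lambda>_. a * real (Suc m) * pi"]) auto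
  then show ?thesis
    by (subst pos_divide_le_eq) (simp_all add: algebra_simps add_pos_nonneg)
qed

end
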